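(* Let $\mathcal{B}$ be a natural correlation basis and $X,Y$ continuous random variables. If $X$ and $Y$ are comonotonic then $\rho^B_{jk}(X,Y)=\delta_{jk}$ for all $j,k\in\mathbb{N}$. If $X$ and $Y$ are countermonotonic then $\rho^B_{jk}(X,Y)=(-1)^j\delta_{jk}$ for all $j,k\in\mathbb{N}$.
   Context: A correlation basis is a complete orthonormal system $\{B_j:j\in\mathbb{N}_0\}$ of $\mathcal{L}^2([0,1])$ with $B_0\equiv1$. It is regular if each $B_j$, $j\ge1$, is (a) piecewise continuous and strictly monotonic (there is a finite partition of $[0,1]$ into intervals on whose interiors $B_j$ is continuous and strictly monotonic) and (b) regular (continuous on $[0,1]$, continuously differentiable on $(0,1)$ with bounded derivative, and $B_j'(u)=0$ iff $u$ is a turning point). It is natural if it is regular and for every $j\in\mathbb{N}$: (i) $B_j'(u)>0$ on some interval $(1-\epsilon_j,1)$, $\epsilon_j>0$; (ii) $B_j$ has exactly $j-1$ turning points; (iii) $B_j(1-u)=(-1)^jB_j(u)$ for all $u\in[0,1]$. The basis correlation is $\rho^B_{jk}(X,Y)=\rho(B_j(F_X(X)),B_k(F_Y(Y)))$ with $\rho$ Pearson correlation; $\delta_{jk}$ is the Kronecker delta. *)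

theory Defs
  imports "HOL-Probability.Probability"
begin

text \<open>Completeness (totality) is stated as: the only square-integrable
  function orthogonal to every B j is zero almost everywhere on [0,1].\<close>

definition sq_integrable01 :: "(real \<Rightarrow> real) \<Rightarrow> bool" where
  "sq_integrable01 f \<longleftrightarrow> f \<in> borel_measurable lborel \<and>
     set_integrable lborel {0..1} (\<lambda>u. (f u)\<^sup>2)"

definition correlation_basis :: "(nat \<Rightarrow> real \<Rightarrow> real) \<Rightarrow> bool" where
  "correlation_basis B \<longleftrightarrow>
     (\<forall>j. sq_integrable01 (B j)) \<and>
     (\<forall>j k. (LINT u:{0..1}|lborel. B j u * B k u) = (if j = k then 1 else 0)) \<and>
     (\<forall>f. sq_integrable01 f \<longrightarrow> (\<forall>j. (LINT u:{0..1}|lborel. f u * B j u) = 0)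
          \<longrightarrow> (AE u in lborel. u \<in> {0..1} \<longrightarrow> f u = 0)) \<and>
     (\<forall>u\<in>{0..1}. B 0 u = 1)"

definition turning_point :: "(real \<Rightarrow> real) \<Rightarrow> real \<Rightarrow> bool" where
  "turning_point b u \<longleftrightarrow> u \<in> {0<..<1} \<and> (\<exists>e>0.
     (strict_mono_on {u-e..u} b \<and> strict_antimono_on {u..u+e} b) \<or>
     (strict_antimono_on {u-e..u} b \<and> strict_mono_on {u..u+e} b))"

definition pw_cont_strict_mono :: "(real \<Rightarrow> real) \<Rightarrow> bool" where
  "pw_cont_strict_mono b \<longleftrightarrow> (\<exists>m::nat. \<exists>t::nat \<Rightarrow> real. m \<ge> 1 \<and> t 0 = 0 \<and> t m = 1 \<and>
     (\<forall>i<m. t i < t (Suc i) \<and> continuous_on {t i<..<t (Suc i)} b \<and>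
        (strict_mono_on {t i<..<t (Suc i)} b \<or> strict_antimono_on {t i<..<t (Suc i)} b)))"

definition regular_fun :: "(real \<Rightarrow> real) \<Rightarrow> bool" where
  "regular_fun b \<longleftrightarrow> continuous_on {0..1} b \<and>
     (\<forall>u\<in>{0<..<1}. b differentiable (at u)) \<and>
     continuous_on {0<..<1} (deriv b) \<and>
     bounded (deriv b ` {0<..<1}) \<and>
     (\<forall>u\<in>{0<..<1}. deriv b u = 0 \<longleftrightarrow> turning_point b u)"

definition regular_basis :: "(nat \<Rightarrow> real \<Rightarrow> real) \<Rightarrow> bool" where
  "regular_basis B \<longleftrightarrow> correlation_basis B \<and>
     (\<forall>j\<ge>1. pw_cont_strict_mono (B j) \<and> regular_fun (B j))"

definition natural_basis :: "(nat \<Rightarrow> real \<Rightarrow> real) \<Rightarrow> bool" where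
  "natural_basis B \<longleftrightarrow> regular_basis B \<and>
     (\<forall>j\<ge>1. (\<exists>e>0. \<forall>u\<in>{1-e<..<1}. deriv (B j) u > 0) \<and>
        finite {u. turning_point (B j) u} \<and> card {u. turning_point (B j) u} = j - 1 \<and>
        (\<forall>u\<in>{0..1}. B j (1 - u) = (-1) ^ j * B j u))"

definition distr_fun :: "'a measure \<Rightarrow> ('a \<Rightarrow> real) \<Rightarrow> real \<Rightarrow> real" where
  "distr_fun M X = cdf (distr M borel X)"

definition continuous_rv :: "'a measure \<Rightarrow> ('a \<Rightarrow> real) \<Rightarrow> bool" where
  "continuous_rv M X \<longleftrightarrow> X \<in> borel_measurable M \<and> continuous_on UNIV (distr_fun M X)"

definition comonotonic :: "'a measure \<Rightarrow> ('a \<Rightarrow> real) \<Rightarrow> ('a \<Rightarrow> real) \<Rightarrow> bool" where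
  "comonotonic M X Y \<longleftrightarrow> (\<exists>A::(real \<times> real) set.
     (\<forall>(x1,y1)\<in>A. \<forall>(x2,y2)\<in>A. (x1 - x2) * (y1 - y2) \<ge> 0) \<and>
     (AE \<omega> in M. (X \<omega>, Y \<omega>) \<in> A))"

definition countermonotonic :: "'a measure \<Rightarrow> ('a \<Rightarrow> real) \<Rightarrow> ('a \<Rightarrow> real) \<Rightarrow> bool" where
  "countermonotonic M X Y \<longleftrightarrow> (\<exists>A::(real \<times> real) set.
     (\<forall>(x1,y1)\<in>A. \<forall>(x2,y2)\<in>A. (x1 - x2) * (y1 - y2) \<le> 0) \<and>
     (AE \<omega> in M. (X \<omega>, Y \<omega>) \<in> A))"

definition pearson :: "'a measure \<Rightarrow> ('a \<Rightarrow> real) \<Rightarrow> ('a \<Rightarrow> real) \<Rightarrow> real" where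
  "pearson M U V =
     (let EU = integral\<^sup>L M U; EV = integral\<^sup>L M V in
      (integral\<^sup>L M (\<lambda>\<omega>. (U \<omega> - EU) * (V \<omega> - EV))) /
      sqrt ((integral\<^sup>L M (\<lambda>\<omega>. (U \<omega> - EU)\<^sup>2)) * (integral\<^sup>L M (\<lambda>\<omega>. (V \<omega> - EV)\<^sup>2))))"

definition basis_corr :: "(nat \<Rightarrow> real \<Rightarrow> real) \<Rightarrow> 'a measure \<Rightarrow> nat \<Rightarrow> nat \<Rightarrow>
    ('a \<Rightarrow> real) \<Rightarrow> ('a \<Rightarrow> real) \<Rightarrow> real" where
  "basis_corr B M j k X Y =
     pearson M (\<lambda>\<omega>. B j (distr_fun M X (X \<omega>))) (\<lambda>\<omega>. B k (distr_fun M Y (Y \<omega>)))"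

end

theory Submission
  imports Defs
begin

(* By the probability integral transform, U = F_X(X) and V = F_Y(Y) are uniform on [0,1], so
   orthonormality of the basis (with B_0 = 1) makes every B_j(U), B_k(V) with j, k >= 1 centred
   with unit variance, and rho^B_jk(X,Y) = E[B_j(U) B_k(V)].  Comonotonicity passes from (X,Y)
   to (U,V), and two comonotonic, identically distributed variables agree almost surely: for each
   rational q the events {U <= q} and {V <= q} have equal probability, while comonotonicity
   allows them to differ only in one direction outside a null set.  Hence V = U a.s. and
   rho^B_jk = E[B_j(U) B_k(U)] = delta_jk.  In the countermonotonic case the same argument applies
   to U and the again uniform 1 - V, so V = 1 - U a.s., and B_k(1 - u) = (-1)^k B_k(u). *)

lemma mono_diff_mult_nonneg:
  fixes f g :: "real \<Rightarrow> real"
  assumes "0 \<le> (x1 - x2) * (y1 - y2)" "mono f" "mono g"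
  shows "0 \<le> (f x1 - f x2) * (g y1 - g y2)"
proof (cases x1 x2 rule: linorder_cases)
  case less
  then have "y1 \<le> y2" using assms(1) by (simp add: zero_le_mult_iff)
  then show ?thesis
    using less assms(2,3) by (intro mult_nonpos_nonpos) (auto simp: mono_def)
next
  case greater
  then have "y2 \<le> y1" using assms(1) by (simp add: zero_le_mult_iff)
  then show ?thesis
    using greater assms(2,3) by (intro mult_nonneg_nonneg) (auto simp: mono_def)
qed simp

lemma comonotonic_comp:
  assumes "comonotonic M X Y" "mono f" "mono g"
  shows "comonotonic M (\<lambda>\<omega>. f (X \<omega>)) (\<lambda>\<omega>. g (Y \<omega>))"
proof -
  obtain S where S: "\<forall>(x1,y1)\<in>S. \<forall>(x2,y2)\<in>S. (x1 - x2) * (y1 - y2) \<ge> 0"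
    and AE_S: "AE \<omega> in M. (X \<omega>, Y \<omega>) \<in> S"
    using assms(1) by (auto simp: comonotonic_def)
  have "0 \<le> (f x1 - f x2) * (g y1 - g y2)" if "(x1, y1) \<in> S" "(x2, y2) \<in> S" for x1 y1 x2 y2
    using bspec[OF bspec[OF S that(1), simplified] that(2)] assms(2,3)
    by (simp add: mono_diff_mult_nonneg)
  then have "\<forall>(x1,y1)\<in>(\<lambda>(x, y). (f x, g y)) ` S. \<forall>(x2,y2)\<in>(\<lambda>(x, y). (f x, g y)) ` S.
      (x1 - x2) * (y1 - y2) \<ge> 0"
    by auto
  moreover have "AE \<omega> in M. (f (X \<omega>), g (Y \<omega>)) \<in> (\<lambda>(x, y). (f x, g y)) ` S"
    using AE_S by eventually_elim auto
  ultimately show ?thesis unfolding comonotonic_def by blast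
qed

lemma comonotonic_uminus_if_countermonotonic:
  assumes "countermonotonic M X Y"
  shows "comonotonic M X (\<lambda>\<omega>. - Y \<omega>)"
proof -
  obtain S where S: "\<forall>(x1,y1)\<in>S. \<forall>(x2,y2)\<in>S. (x1 - x2) * (y1 - y2) \<le> 0"
    and AE_S: "AE \<omega> in M. (X \<omega>, Y \<omega>) \<in> S"
    using assms by (auto simp: countermonotonic_def)
  have "\<forall>(x1,y1)\<in>apsnd uminus ` S. \<forall>(x2,y2)\<in>apsnd uminus ` S. (x1 - x2) * (y1 - y2) \<ge> 0"
    using S by (fastforce simp: algebra_simps)
  moreover have "AE \<omega> in M. (X \<omega>, - Y \<omega>) \<in> apsnd uminus ` S"
    using AE_S by eventually_elim (auto intro: image_eqI[where x = "(X _, Y _)"])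
  ultimately show ?thesis unfolding comonotonic_def by blast
qed

lemma comonotonic_comp_if_countermonotonic:
  assumes "countermonotonic M X Y" "mono f" "antimono g"
  shows "comonotonic M (\<lambda>\<omega>. f (X \<omega>)) (\<lambda>\<omega>. g (Y \<omega>))"
  using comonotonic_comp[OF comonotonic_uminus_if_countermonotonic[OF assms(1)] assms(2),
      of "\<lambda>y. g (- y)"] assms(3)
  by (simp add: mono_def antimono_def)

lemma pearson_eq_integral_if_standardized:
  assumes "(\<integral>\<omega>. U \<omega> \<partial>M) = 0" "(\<integral>\<omega>. V \<omega> \<partial>M) = 0"
    and "(\<integral>\<omega>. (U \<omega>)\<^sup>2 \<partial>M) = 1" "(\<integral>\<omega>. (V \<omega>)\<^sup>2 \<partial>M) = 1"
  shows "pearson M U V = (\<integral>\<omega>. U \<omega> * V \<omega> \<partial>M)"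
  using assms by (simp add: pearson_def)

lemma distr_eq_if_distributed_same_density:
  assumes "distributed M lborel U f" "distributed M lborel W f"
  shows "distr M borel U = distr M borel W"
  using assms[THEN distributed_distr_eq_density] by (metis distr_cong sets_lborel)

lemma correlation_basisD:
  assumes "correlation_basis B"
  shows "B j \<in> borel_measurable borel"
    and "(LINT u:{0..1}|lborel. B j u * B k u) = (if j = k then 1 else 0)"
    and "j \<ge> 1 \<Longrightarrow> (LINT u:{0..1}|lborel. B j u) = 0"
proof -
  show "B j \<in> borel_measurable borel"
    using assms by (simp add: correlation_basis_def sq_integrable01_def)
  show orth: "(LINT u:{0..1}|lborel. B j u * B k u) = (if j = k then 1 else 0)" for j k
    using assms by (simp add: correlation_basis_def)
  assume "j \<ge> 1"
  have "(LINT u:{0..1}|lborel. B j u) = (LINT u:{0..1}|lborel. B j u * B 0 u)"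
    using assms by (intro set_lebesgue_integral_cong) (auto simp: correlation_basis_def)
  then show "(LINT u:{0..1}|lborel. B j u) = 0"
    using orth[of j 0] \<open>j \<ge> 1\<close> by simp
qed

context prob_space
begin

lemma distr_fun_eq_prob:
  assumes "X \<in> borel_measurable M"
  shows "distr_fun M X x = prob {\<omega>\<in>space M. X \<omega> \<le> x}"
  unfolding distr_fun_def cdf_def using assms
  by (subst measure_distr) (auto simp: vimage_def Int_def conj_commute)

lemma mono_distr_fun:
  assumes "X \<in> borel_measurable M"
  shows "mono (distr_fun M X)"
proof -
  interpret D: real_distribution "distr M borel X" using assms by simp
  show ?thesis by (auto intro: monoI D.cdf_nondecreasing simp: distr_fun_def)
qed

lemma distr_fun_bounds:
  assumes "X \<in> borel_measurable M"
  shows "0 \<le> distr_fun M X x" "distr_fun M X x \<le> 1"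
proof -
  interpret D: real_distribution "distr M borel X" using assms by simp
  show "0 \<le> distr_fun M X x" "distr_fun M X x \<le> 1"
    by (simp_all add: distr_fun_def D.cdf_nonneg D.cdf_bounded_prob)
qed

lemma distr_fun_level_set:
  assumes X: "continuous_rv M X" and t: "0 < t" "t < 1"
  obtains x0 where "distr_fun M X x0 = t" "\<And>x. distr_fun M X x \<le> t \<longleftrightarrow> x \<le> x0"
proof -
  define F where "F = distr_fun M X"
  have Xm: "X \<in> borel_measurable M" and F_cont: "continuous_on UNIV F"
    using X by (auto simp: continuous_rv_def F_def)
  interpret D: real_distribution "distr M borel X" using Xm by simp
  have F_mono: "F x \<le> F y" if "x \<le> y" for x y
    using mono_distr_fun[OF Xm] that by (auto simp: F_def mono_def)
  obtain a where a: "F a < t"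
    using order_tendstoD(2)[OF D.cdf_lim_at_bot t(1)]
    by (auto simp: F_def distr_fun_def eventually_at_bot_linorder)
  obtain b where b: "t < F b"
    using order_tendstoD(1)[OF D.cdf_lim_at_top_prob t(2)]
    by (auto simp: F_def distr_fun_def eventually_at_top_linorder)
  define S where "S = {x. F x \<le> t}"
  have "closed S"
    unfolding S_def by (rule closed_Collect_le[OF F_cont continuous_on_const, simplified])
  have S_le_b: "x \<le> b" if "x \<in> S" for x
    using that b F_mono[of b x] by (cases "x \<le> b") (auto simp: S_def)
  then have "bdd_above S" by (auto simp: bdd_above_def)
  define x0 where "x0 = Sup S"
  have S_iff: "x \<in> S \<longleftrightarrow> x \<le> x0" for x
  proof
    show "x \<in> S \<Longrightarrow> x \<le> x0" using \<open>bdd_above S\<close> by (simp add: x0_def cSup_upper)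
    have "x0 \<in> S"
      unfolding x0_def using closed_contains_Sup[OF _ \<open>bdd_above S\<close> \<open>closed S\<close>] a
      by (metis (mono_tags) S_def empty_iff less_le mem_Collect_eq)
    then show "x \<le> x0 \<Longrightarrow> x \<in> S" using F_mono[of x x0] by (simp add: S_def)
  qed
  have "x0 \<le> b" using S_le_b S_iff by blast
  then obtain c where "x0 \<le> c" "F c = t"
    using IVT'[of F x0 t b] S_iff[of x0] b continuous_on_subset[OF F_cont] by (auto simp: S_def)
  then have "F x0 = t" using S_iff[of c] by (simp add: S_def)
  then show thesis using that S_iff by (simp add: F_def S_def)
qed

lemma measurable_distr_fun_comp:
  assumes "continuous_rv M X"
  shows "(\<lambda>\<omega>. distr_fun M X (X \<omega>)) \<in> borel_measurable M"
proof -
  have "distr_fun M X \<in> borel_measurable borel"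
    using assms by (intro borel_measurable_continuous_onI) (auto simp: continuous_rv_def)
  then show ?thesis using assms by (auto simp: continuous_rv_def)
qed

lemma distributed_distr_fun_uniform:
  assumes X: "continuous_rv M X"
  shows "distributed M lborel (\<lambda>\<omega>. distr_fun M X (X \<omega>))
           (\<lambda>u. indicator {0..1} u / measure lborel {0..1::real})"
proof (rule uniform_distrI_borel_atLeastAtMost)
  let ?U = "\<lambda>\<omega>. distr_fun M X (X \<omega>)"
  have Xm: "X \<in> borel_measurable M" using X by (simp add: continuous_rv_def)
  show Um: "?U \<in> borel_measurable M" using measurable_distr_fun_comp[OF X] .
  have interior: "prob {\<omega>\<in>space M. ?U \<omega> \<le> t} = t" if t: "0 < t" "t < 1" for t
  proof -
    obtain x0 where "distr_fun M X x0 = t" "\<And>x. distr_fun M X x \<le> t \<longleftrightarrow> x \<le> x0"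
      using distr_fun_level_set[OF X t] by blast
    then show ?thesis by (simp add: distr_fun_eq_prob[OF Xm])
  qed
  have zero: "prob {\<omega>\<in>space M. ?U \<omega> \<le> 0} \<le> 0"
  proof (rule dense_ge_bounded[of 0 1])
    fix e :: real assume e: "0 < e" "e < 1"
    have "prob {\<omega>\<in>space M. ?U \<omega> \<le> 0} \<le> prob {\<omega>\<in>space M. ?U \<omega> \<le> e}"
      using Um e by (intro finite_measure_mono) auto
    then show "prob {\<omega>\<in>space M. ?U \<omega> \<le> 0} \<le> e"
      using interior[OF e] by simp
  qed simp
  have one: "{\<omega>\<in>space M. ?U \<omega> \<le> 1} = space M"
    using distr_fun_bounds[OF Xm] by auto
  fix t :: real assume "0 \<le> t" "t \<le> 1"
  then consider "t = 0" | "0 < t \<and> t < 1" | "t = 1" by linarith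
  then show "prob {\<omega>\<in>space M. ?U \<omega> \<le> t} = (t - 0) / (1 - 0)"
    by cases (use interior zero one measure_nonneg[of M] prob_space in \<open>auto intro: antisym\<close>)
qed simp

lemma prob_point_eq_0_if_distributed_lborel:
  assumes "distributed M lborel Z f"
  shows "prob {\<omega>\<in>space M. Z \<omega> = s} = 0"
proof -
  have "emeasure M (Z -` {s} \<inter> space M) = (\<integral>\<^sup>+x. f x * indicator {s} x \<partial>lborel)"
    using distributed_emeasure[OF assms] by simp
  also have "\<dots> = 0"
    using AE_lborel_singleton[of s] distributed_borel_measurable[OF assms]
    by (intro nn_integral_0_iff_AE[THEN iffD2]) (auto elim!: AE_mp)
  finally show ?thesis
    by (simp add: measure_def vimage_def Int_def conj_commute)
qed

lemma uniform_distributed_reflect: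
  fixes a b :: real
  assumes D: "distributed M lborel Z (\<lambda>x. indicator {a..b} x / measure lborel {a..b})"
  shows "distributed M lborel (\<lambda>\<omega>. a + b - Z \<omega>)
           (\<lambda>x. indicator {a..b} x / measure lborel {a..b})"
proof -
  have Zm: "Z \<in> borel_measurable M" and "a < b"
    using distributed_measurable[OF D] uniform_distributed_bounds[OF D] by auto
  have "prob {\<omega>\<in>space M. a + b - Z \<omega> \<le> t} = (t - a) / (b - a)" if "a \<le> t" "t \<le> b" for t
  proof -
    have "{\<omega>\<in>space M. a + b - Z \<omega> \<le> t} =
        space M - ({\<omega>\<in>space M. Z \<omega> \<le> a + b - t} - {\<omega>\<in>space M. Z \<omega> = a + b - t})"
      by auto
    also have "prob \<dots> =
        1 - (prob {\<omega>\<in>space M. Z \<omega> \<le> a + b - t} - prob {\<omega>\<in>space M. Z \<omega> = a + b - t})"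
      using Zm by (subst prob_compl, measurable) (subst finite_measure_Diff, auto)
    also have "\<dots> = (t - a) / (b - a)"
      using uniform_distributed_measure[OF D, of "a + b - t"]
        prob_point_eq_0_if_distributed_lborel[OF D, of "a + b - t"] that \<open>a < b\<close> by (simp add: field_simps)
    finally show ?thesis .
  qed
  then show ?thesis
    using Zm \<open>a < b\<close> by (subst uniform_distributed_iff) auto
qed

lemma AE_mem_iff_if_prob_eq:
  assumes A: "A \<in> events" and B: "B \<in> events" and "prob A = prob B" and "A - B \<in> null_sets M"
  shows "AE \<omega> in M. \<omega> \<in> A \<longleftrightarrow> \<omega> \<in> B"
proof -
  have "prob (B - A) = prob (A - B)"
    using assms finite_measure_Diff'[OF A B] finite_measure_Diff'[OF B A] by (simp add: Int_commute)
  then have "B - A \<in> null_sets M"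
    using assms by (auto simp: null_sets_def emeasure_eq_measure)
  then show ?thesis
    by (rule AE_I'[OF null_sets.Un[OF \<open>A - B \<in> null_sets M\<close>]]) blast
qed

lemma AE_le_iff_le_if_comonotonic:
  assumes "comonotonic M U W" and [measurable]: "U \<in> borel_measurable M" "W \<in> borel_measurable M"
    and same_cdf: "prob {\<omega>\<in>space M. U \<omega> \<le> q} = prob {\<omega>\<in>space M. W \<omega> \<le> q}"
  shows "AE \<omega> in M. U \<omega> \<le> q \<longleftrightarrow> W \<omega> \<le> q"
proof -
  obtain S where S: "\<forall>(x1,y1)\<in>S. \<forall>(x2,y2)\<in>S. (x1 - x2) * (y1 - y2) \<ge> 0"
    and AE_S: "AE \<omega> in M. (U \<omega>, W \<omega>) \<in> S"
    using assms(1) by (auto simp: comonotonic_def)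
  from AE_S obtain N
    where "{\<omega>\<in>space M. (U \<omega>, W \<omega>) \<notin> S} \<subseteq> N" "emeasure M N = 0" "N \<in> sets M"
    by (rule AE_E)
  then have N_null: "N \<in> null_sets M"
    and in_S: "\<And>\<omega>. \<omega> \<in> space M - N \<Longrightarrow> (U \<omega>, W \<omega>) \<in> S"
    by (auto intro: null_setsI)
  define A where "A = {\<omega>\<in>space M. U \<omega> \<le> q}"
  define B where "B = {\<omega>\<in>space M. W \<omega> \<le> q}"
  have events: "A \<in> events" "B \<in> events" "A - B \<in> events" "B - A \<in> events"
    by (simp_all add: A_def B_def sets.Diff)
  have "A - B \<subseteq> N \<or> B - A \<subseteq> N"
  proof (rule ccontr)
    assume "\<not> ?thesis"
    then obtain \<omega>1 \<omega>2 where \<omega>: "\<omega>1 \<in> A - B - N" "\<omega>2 \<in> B - A - N" by blast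
    then have "(U \<omega>1 - U \<omega>2) * (W \<omega>1 - W \<omega>2) < 0"
      by (auto simp: A_def B_def mult_neg_pos)
    moreover have "(U \<omega>1, W \<omega>1) \<in> S" "(U \<omega>2, W \<omega>2) \<in> S"
      using \<omega> in_S by (auto simp: A_def B_def)
    ultimately show False
      using bspec[OF bspec[OF S \<open>(U \<omega>1, W \<omega>1) \<in> S\<close>, simplified] \<open>(U \<omega>2, W \<omega>2) \<in> S\<close>] by simp
  qed
  then have "AE \<omega> in M. \<omega> \<in> A \<longleftrightarrow> \<omega> \<in> B"
  proof
    assume "A - B \<subseteq> N"
    then show ?thesis
      using events same_cdf null_sets_subset[OF N_null events(3)]
      by (intro AE_mem_iff_if_prob_eq) (simp_all add: A_def B_def)
  next
    assume "B - A \<subseteq> N"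
    then have "AE \<omega> in M. \<omega> \<in> B \<longleftrightarrow> \<omega> \<in> A"
      using events same_cdf null_sets_subset[OF N_null events(4)]
      by (intro AE_mem_iff_if_prob_eq) (simp_all add: A_def B_def)
    then show ?thesis by eventually_elim blast
  qed
  with AE_space show ?thesis by eventually_elim (auto simp: A_def B_def)
qed

lemma AE_eq_if_comonotonic_identically_distributed:
  assumes "comonotonic M U W" and [measurable]: "U \<in> borel_measurable M" "W \<in> borel_measurable M"
    and "distr M borel U = distr M borel W"
  shows "AE \<omega> in M. U \<omega> = W \<omega>"
proof -
  have "prob {\<omega>\<in>space M. U \<omega> \<le> q} = prob {\<omega>\<in>space M. W \<omega> \<le> q}" for q
    using arg_cong[OF assms(4), of "\<lambda>D. measure D {..q}"]
    by (simp add: measure_distr vimage_def Int_def conj_commute)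
  then have "AE \<omega> in M. \<forall>q\<in>\<rat>. U \<omega> \<le> q \<longleftrightarrow> W \<omega> \<le> q"
    using AE_le_iff_le_if_comonotonic[OF assms(1-3)] countable_rat
    by (intro AE_ball_countable') auto
  then show ?thesis
  proof (rule AE_mp, intro AE_I2 impI)
    fix \<omega> assume rat_iff: "\<forall>q\<in>\<rat>. U \<omega> \<le> q \<longleftrightarrow> W \<omega> \<le> q"
    show "U \<omega> = W \<omega>"
    proof (cases "U \<omega>" "W \<omega>" rule: linorder_cases)
      case less
      then obtain q where "q \<in> \<rat>" "U \<omega> < q" "q < W \<omega>" using Rats_dense_in_real by blast
      then show ?thesis using bspec[OF rat_iff \<open>q \<in> \<rat>\<close>] by simp
    next
      case greater
      then obtain q where "q \<in> \<rat>" "W \<omega> < q" "q < U \<omega>" using Rats_dense_in_real by blast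
      then show ?thesis using bspec[OF rat_iff \<open>q \<in> \<rat>\<close>] by simp
    qed
  qed
qed

lemma integral_uniform_distributed:
  fixes a b :: real
  assumes "distributed M lborel U (\<lambda>u. indicator {a..b} u / measure lborel {a..b})"
    and "g \<in> borel_measurable borel"
  shows "(\<integral>\<omega>. g (U \<omega>) \<partial>M) = (LINT u:{a..b}|lborel. g u) / (b - a)"
proof -
  have "a < b" using uniform_distributed_bounds[OF assms(1)] .
  have "(\<integral>\<omega>. g (U \<omega>) \<partial>M) = (\<integral>u. indicator {a..b} u / measure lborel {a..b} * g u \<partial>lborel)"
    using assms by (intro distributed_integral[symmetric]) auto
  also have "\<dots> = (LINT u:{a..b}|lborel. g u) / (b - a)"
    using \<open>a < b\<close> by (simp add: set_lebesgue_integral_def)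
  finally show ?thesis .
qed

lemma integral_correlation_basis_distr_fun:
  assumes B: "correlation_basis B" and X: "continuous_rv M X"
  shows "j \<ge> 1 \<Longrightarrow> (\<integral>\<omega>. B j (distr_fun M X (X \<omega>)) \<partial>M) = 0"
    and "(\<integral>\<omega>. B j (distr_fun M X (X \<omega>)) * B k (distr_fun M X (X \<omega>)) \<partial>M) = (if j = k then 1 else 0)"
  using integral_uniform_distributed[OF distributed_distr_fun_uniform[OF X], of "B j"]
    integral_uniform_distributed[OF distributed_distr_fun_uniform[OF X], of "\<lambda>u. B j u * B k u"]
    correlation_basisD[OF B]
  by simp_all

lemma basis_corr_eq_integral:
  assumes B: "correlation_basis B" and X: "continuous_rv M X" and Y: "continuous_rv M Y"
    and "j \<ge> 1" "k \<ge> 1"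
  shows "basis_corr B M j k X Y =
    (\<integral>\<omega>. B j (distr_fun M X (X \<omega>)) * B k (distr_fun M Y (Y \<omega>)) \<partial>M)"
  unfolding basis_corr_def using assms
  by (intro pearson_eq_integral_if_standardized)
     (simp_all add: integral_correlation_basis_distr_fun power2_eq_square)

lemma basis_corr_if_comonotonic:
  assumes B: "correlation_basis B" and X: "continuous_rv M X" and Y: "continuous_rv M Y"
    and "comonotonic M X Y" and jk: "j \<ge> 1" "k \<ge> 1"
  shows "basis_corr B M j k X Y = (if j = k then 1 else 0)"
proof -
  let ?U = "\<lambda>\<omega>. distr_fun M X (X \<omega>)" and ?V = "\<lambda>\<omega>. distr_fun M Y (Y \<omega>)"
  have Xm: "X \<in> borel_measurable M" and Ym: "Y \<in> borel_measurable M"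
    using X Y by (simp_all add: continuous_rv_def)
  have "comonotonic M ?U ?V"
    using assms(4) mono_distr_fun[OF Xm] mono_distr_fun[OF Ym] by (rule comonotonic_comp)
  moreover have "distr M borel ?U = distr M borel ?V"
    using distributed_distr_fun_uniform[OF X] distributed_distr_fun_uniform[OF Y]
    by (rule distr_eq_if_distributed_same_density)
  ultimately have "AE \<omega> in M. ?U \<omega> = ?V \<omega>"
    using measurable_distr_fun_comp[OF X] measurable_distr_fun_comp[OF Y]
    by (intro AE_eq_if_comonotonic_identically_distributed)
  then have "(\<integral>\<omega>. B j (?U \<omega>) * B k (?V \<omega>) \<partial>M) = (\<integral>\<omega>. B j (?U \<omega>) * B k (?U \<omega>) \<partial>M)"
    by (intro integral_cong_AE) (use measurable_distr_fun_comp[OF X] measurable_distr_fun_comp[OF Y]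
        correlation_basisD(1)[OF B] in \<open>measurable, auto\<close>)
  then show ?thesis
    using basis_corr_eq_integral[OF B X Y jk] integral_correlation_basis_distr_fun(2)[OF B X] by simp
qed

lemma basis_corr_if_countermonotonic:
  assumes B: "correlation_basis B" and X: "continuous_rv M X" and Y: "continuous_rv M Y"
    and "countermonotonic M X Y" and jk: "j \<ge> 1" "k \<ge> 1"
    and reflect: "\<And>u. u \<in> {0..1} \<Longrightarrow> B k (1 - u) = (-1) ^ k * B k u"
  shows "basis_corr B M j k X Y = (-1) ^ j * (if j = k then 1 else 0)"
proof -
  let ?U = "\<lambda>\<omega>. distr_fun M X (X \<omega>)" and ?V = "\<lambda>\<omega>. distr_fun M Y (Y \<omega>)"
  have Xm: "X \<in> borel_measurable M" and Ym: "Y \<in> borel_measurable M"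
    using X Y by (simp_all add: continuous_rv_def)
  have "antimono (\<lambda>y. 1 - distr_fun M Y y)"
    using mono_distr_fun[OF Ym] by (auto simp: mono_def antimono_def)
  then have "comonotonic M ?U (\<lambda>\<omega>. 1 - ?V \<omega>)"
    using assms(4) mono_distr_fun[OF Xm] by (intro comonotonic_comp_if_countermonotonic)
  moreover have "distr M borel ?U = distr M borel (\<lambda>\<omega>. 1 - ?V \<omega>)"
  proof (rule distr_eq_if_distributed_same_density)
    show "distributed M lborel (\<lambda>\<omega>. 1 - ?V \<omega>)
        (\<lambda>u. indicator {0..1} u / measure lborel {0..1::real})"
      using uniform_distributed_reflect[OF distributed_distr_fun_uniform[OF Y]] by simp
  qed (rule distributed_distr_fun_uniform[OF X])
  ultimately have "AE \<omega> in M. ?U \<omega> = 1 - ?V \<omega>"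
    using measurable_distr_fun_comp[OF X] measurable_distr_fun_comp[OF Y]
    by (intro AE_eq_if_comonotonic_identically_distributed) auto
  then have "AE \<omega> in M. B k (?V \<omega>) = (-1) ^ k * B k (?U \<omega>)"
  proof eventually_elim
    case (elim \<omega>)
    then have "?V \<omega> = 1 - ?U \<omega>" by simp
    then show ?case using reflect distr_fun_bounds[OF Xm, of "X \<omega>"] by simp
  qed
  then have "(\<integral>\<omega>. B j (?U \<omega>) * B k (?V \<omega>) \<partial>M) =
      (\<integral>\<omega>. (-1) ^ k * (B j (?U \<omega>) * B k (?U \<omega>)) \<partial>M)"
    by (intro integral_cong_AE) (use measurable_distr_fun_comp[OF X] measurable_distr_fun_comp[OF Y]
        correlation_basisD(1)[OF B] in \<open>measurable, auto\<close>)
  then show ?thesis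
    using basis_corr_eq_integral[OF B X Y jk] integral_correlation_basis_distr_fun(2)[OF B X] by simp
qed

end

theorem proposition3:
  fixes M :: "'a measure" and B :: "nat \<Rightarrow> real \<Rightarrow> real" and X Y :: "'a \<Rightarrow> real"
  assumes "prob_space M"
    and "natural_basis B"
    and "continuous_rv M X" and "continuous_rv M Y"
  shows "(comonotonic M X Y \<longrightarrow>
            (\<forall>j\<ge>1. \<forall>k\<ge>1. basis_corr B M j k X Y = (if j = k then 1 else 0))) \<and>
         (countermonotonic M X Y \<longrightarrow>
            (\<forall>j\<ge>1. \<forall>k\<ge>1. basis_corr B M j k X Y = (-1) ^ j * (if j = k then 1 else 0)))"
proof -
  interpret prob_space M by fact
  have B: "correlation_basis B"
    using assms(2) by (simp add: natural_basis_def regular_basis_def)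
  have reflect: "B k (1 - u) = (-1) ^ k * B k u" if "k \<ge> 1" "u \<in> {0..1}" for k u
    using assms(2) that by (simp add: natural_basis_def)
  show ?thesis
    using basis_corr_if_comonotonic[OF B assms(3,4)]
      basis_corr_if_countermonotonic[OF B assms(3,4) _ _ _ reflect]
    by auto
qed

end
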